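(* For every graph $G$ on $n$ vertices, $\operatorname{box}(G)\le MVC(G)+2=n-\alpha(G)+2$.
   Context: $MVC(G)$ is the minimum cardinality of a vertex cover of $G$ (a set of vertices meeting every edge) and $\alpha(G)$ is the maximum size of an independent set. The boxicity $\operatorname{box}(G)$ is the minimum $b$ such that $G$ is the intersection graph of axis-parallel boxes in $\mathbb{R}^b$ (products of $b$ closed intervals), one box per vertex. *)

theory Defs
  imports Complex_Main
begin

definition simple_graph :: "'a set \<Rightarrow> ('a \<Rightarrow> 'a \<Rightarrow> bool) \<Rightarrow> bool" where
  "simple_graph V E \<longleftrightarrow> finite V \<and> (\<forall>u v. E u v \<longrightarrow> u \<in> V \<and> v \<in> V)
     \<and> (\<forall>u v. E u v \<longrightarrow> E v u) \<and> (\<forall>v. \<not> E v v)"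

definition vertex_cover :: "'a set \<Rightarrow> ('a \<Rightarrow> 'a \<Rightarrow> bool) \<Rightarrow> 'a set \<Rightarrow> bool" where
  "vertex_cover V E C \<longleftrightarrow> C \<subseteq> V \<and> (\<forall>u v. E u v \<longrightarrow> u \<in> C \<or> v \<in> C)"

definition MVC :: "'a set \<Rightarrow> ('a \<Rightarrow> 'a \<Rightarrow> bool) \<Rightarrow> nat" where
  "MVC V E = Min {card C | C. vertex_cover V E C}"

definition independent_set :: "'a set \<Rightarrow> ('a \<Rightarrow> 'a \<Rightarrow> bool) \<Rightarrow> 'a set \<Rightarrow> bool" where
  "independent_set V E S \<longleftrightarrow> S \<subseteq> V \<and> (\<forall>u\<in>S. \<forall>v\<in>S. \<not> E u v)"

definition alpha :: "'a set \<Rightarrow> ('a \<Rightarrow> 'a \<Rightarrow> bool) \<Rightarrow> nat" where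
  "alpha V E = Max {card S | S. independent_set V E S}"

definition box_rep :: "'a set \<Rightarrow> ('a \<Rightarrow> 'a \<Rightarrow> bool) \<Rightarrow> nat \<Rightarrow>
    ('a \<Rightarrow> nat \<Rightarrow> real) \<Rightarrow> ('a \<Rightarrow> nat \<Rightarrow> real) \<Rightarrow> bool" where
  "box_rep V E b l r \<longleftrightarrow>
     (\<forall>v\<in>V. \<forall>i<b. l v i \<le> r v i) \<and>
     (\<forall>u\<in>V. \<forall>v\<in>V. u \<noteq> v \<longrightarrow>
        (E u v \<longleftrightarrow> (\<exists>x::nat \<Rightarrow> real. \<forall>i<b.
            l u i \<le> x i \<and> x i \<le> r u i \<and> l v i \<le> x i \<and> x i \<le> r v i)))"

definition boxicity :: "'a set \<Rightarrow> ('a \<Rightarrow> 'a \<Rightarrow> bool) \<Rightarrow> nat" where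
  "boxicity V E = (LEAST b. \<exists>l r. box_rep V E b l r)"

end

theory Submission
  imports Defs
begin

text \<open>Take a vertex cover \<open>C\<close>. For every \<open>c \<in> C\<close> one coordinate separates \<open>c\<close> from its
  non-neighbours: \<open>c\<close> gets \<open>[1,1]\<close>, its neighbours \<open>[0,1]\<close>, all other vertices \<open>[0,0]\<close>.
  One more coordinate separates any two vertices outside \<open>C\<close>: they get distinct points,
  while the vertices of \<open>C\<close> get an interval containing all these points. Two distinct
  vertices then have intersecting boxes iff one of them lies in \<open>C\<close> and they are adjacent,
  i.e. iff they are adjacent. Hence even \<open>box(G) \<le> MVC(G) + 1\<close>; and \<open>MVC(G) = n - \<alpha>(G)\<close> because
  complements of vertex covers are exactly the independent sets.\<close>

lemma closed_intervals_meet_iff: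
  fixes a b c d :: "'a::linorder"
  shows "(\<exists>y. a \<le> y \<and> y \<le> b \<and> c \<le> y \<and> y \<le> d) \<longleftrightarrow> a \<le> b \<and> c \<le> d \<and> a \<le> d \<and> c \<le> b"
proof
  assume "a \<le> b \<and> c \<le> d \<and> a \<le> d \<and> c \<le> b"
  then show "\<exists>y. a \<le> y \<and> y \<le> b \<and> c \<le> y \<and> y \<le> d"
    by (intro exI[of _ "max a c"]) auto
qed (meson order.trans)

lemma box_rep_iff:
  "box_rep V E b l r \<longleftrightarrow>
     (\<forall>v\<in>V. \<forall>i<b. l v i \<le> r v i) \<and>
     (\<forall>u\<in>V. \<forall>v\<in>V. u \<noteq> v \<longrightarrow> (E u v \<longleftrightarrow> (\<forall>i<b. l u i \<le> r v i \<and> l v i \<le> r u i)))"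
proof -
  have meet: "(\<exists>x. \<forall>i<b. l u i \<le> x i \<and> x i \<le> r u i \<and> l v i \<le> x i \<and> x i \<le> r v i)
      \<longleftrightarrow> (\<forall>i<b. l u i \<le> r u i \<and> l v i \<le> r v i \<and> l u i \<le> r v i \<and> l v i \<le> r u i)" for u v
  proof -
    have "(\<exists>x. \<forall>i<b. l u i \<le> x i \<and> x i \<le> r u i \<and> l v i \<le> x i \<and> x i \<le> r v i)
        \<longleftrightarrow> (\<forall>i<b. \<exists>y. l u i \<le> y \<and> y \<le> r u i \<and> l v i \<le> y \<and> y \<le> r v i)"
      by (rule choice_iff'[symmetric])
    then show ?thesis by (simp only: closed_intervals_meet_iff)
  qed
  show ?thesis
    unfolding box_rep_def meet by (intro conj_cong refl) blast
qed

definition star_lo :: "'a \<Rightarrow> 'a \<Rightarrow> real" where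
  "star_lo c w = (if w = c then 1 else 0)"

definition star_hi :: "('a \<Rightarrow> 'a \<Rightarrow> bool) \<Rightarrow> 'a \<Rightarrow> 'a \<Rightarrow> real" where
  "star_hi E c w = (if w = c \<or> E c w then 1 else 0)"

lemma star_lo_le_hi: "star_lo c w \<le> star_hi E c w"
  by (simp add: star_lo_def star_hi_def)

lemma star_intervals_meet_iff:
  assumes "\<And>u v. E u v \<Longrightarrow> E v u" and "u \<noteq> v"
  shows "star_lo c u \<le> star_hi E c v \<and> star_lo c v \<le> star_hi E c u
    \<longleftrightarrow> ((u = c \<or> v = c) \<longrightarrow> E u v)"
  using assms by (auto simp: star_lo_def star_hi_def)

definition cover_lo :: "'a set \<Rightarrow> ('a \<Rightarrow> nat) \<Rightarrow> 'a \<Rightarrow> real" where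
  "cover_lo C h w = (if w \<in> C then 0 else real (h w))"

definition cover_hi :: "'a set \<Rightarrow> ('a \<Rightarrow> nat) \<Rightarrow> nat \<Rightarrow> 'a \<Rightarrow> real" where
  "cover_hi C h N w = (if w \<in> C then real N else real (h w))"

lemma cover_lo_le_hi: "cover_lo C h w \<le> cover_hi C h N w"
  by (simp add: cover_lo_def cover_hi_def)

lemma cover_intervals_meet_iff:
  assumes "inj_on h V" and "u \<in> V" "v \<in> V" "u \<noteq> v" and "\<And>w. w \<in> V \<Longrightarrow> h w \<le> N"
  shows "cover_lo C h u \<le> cover_hi C h N v \<and> cover_lo C h v \<le> cover_hi C h N u
    \<longleftrightarrow> u \<in> C \<or> v \<in> C"
proof -
  have "h u \<noteq> h v" using assms(1-4) by (auto dest: inj_onD)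
  moreover have "h u \<le> N" "h v \<le> N" using assms(2,3,5) by auto
  ultimately show ?thesis
    by (cases "u \<in> C"; cases "v \<in> C") (simp_all add: cover_lo_def cover_hi_def)
qed

lemma box_rep_from_vertex_cover:
  assumes "finite V" and sym: "\<And>u v. E u v \<Longrightarrow> E v u" and C: "vertex_cover V E C"
  shows "\<exists>l r. box_rep V E (card C + 1) l r"
proof -
  have CV: "C \<subseteq> V" and cover: "\<And>u v. E u v \<Longrightarrow> u \<in> C \<or> v \<in> C"
    using C by (auto simp: vertex_cover_def)
  define m where "m = card C"
  have "finite C" using CV \<open>finite V\<close> finite_subset by blast
  then obtain g where "bij_betw g {0..<m} C"
    unfolding m_def using ex_bij_betw_nat_finite by blast
  then have g_onto: "g ` {0..<m} = C"
    by (rule bij_betw_imp_surj_on)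
  obtain h :: "'a \<Rightarrow> nat" where h: "inj_on h V"
    using finite_imp_inj_to_nat_seg[OF \<open>finite V\<close>] by blast
  define N where "N = Max (h ` V)"
  have h_le_N: "h w \<le> N" if "w \<in> V" for w
    using \<open>finite V\<close> that by (simp add: N_def)
  define l where "l v i = (if i < m then star_lo (g i) v else cover_lo C h v)" for v i
  define r where "r v i = (if i < m then star_hi E (g i) v else cover_hi C h N v)" for v i
  have "E u v \<longleftrightarrow> (\<forall>i<m + 1. l u i \<le> r v i \<and> l v i \<le> r u i)"
    if "u \<in> V" "v \<in> V" "u \<noteq> v" for u v
  proof -
    have "(\<forall>i<m + 1. l u i \<le> r v i \<and> l v i \<le> r u i)
        \<longleftrightarrow> (\<forall>i<m. (u = g i \<or> v = g i) \<longrightarrow> E u v) \<and> (u \<in> C \<or> v \<in> C)"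
      using star_intervals_meet_iff[OF sym \<open>u \<noteq> v\<close>]
        cover_intervals_meet_iff[OF h that h_le_N]
      by (simp add: l_def r_def less_Suc_eq conj_commute all_conj_distrib)
    also have "\<dots> \<longleftrightarrow> (\<forall>c\<in>C. (u = c \<or> v = c) \<longrightarrow> E u v) \<and> (u \<in> C \<or> v \<in> C)"
      unfolding g_onto[symmetric] by auto
    also have "\<dots> \<longleftrightarrow> E u v"
      using cover by blast
    finally show ?thesis ..
  qed
  then have "box_rep V E (m + 1) l r"
    unfolding box_rep_iff l_def r_def by (simp add: star_lo_le_hi cover_lo_le_hi)
  then show ?thesis
    unfolding m_def by blast
qed

lemma vertex_cover_iff_independent_set_complement:
  assumes "\<And>u v. E u v \<Longrightarrow> u \<in> V \<and> v \<in> V" and "C \<subseteq> V"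
  shows "vertex_cover V E C \<longleftrightarrow> independent_set V E (V - C)"
  unfolding vertex_cover_def independent_set_def using assms by blast

lemma finite_cards_of_subsets:
  assumes "finite V" and "\<And>C. P C \<Longrightarrow> C \<subseteq> V"
  shows "finite {card C | C. P C}"
proof (rule finite_subset)
  show "{card C | C. P C} \<subseteq> card ` Pow V"
    using assms(2) by blast
qed (simp add: assms(1))

lemma MVC_le_card:
  assumes "finite V" and "vertex_cover V E C"
  shows "MVC V E \<le> card C"
  unfolding MVC_def
proof (rule Min_le)
  show "finite {card C | C. vertex_cover V E C}"
    using assms(1) by (rule finite_cards_of_subsets) (simp add: vertex_cover_def)
qed (use assms(2) in blast)

lemma card_le_alpha:
  assumes "finite V" and "independent_set V E S"
  shows "card S \<le> alpha V E"
  unfolding alpha_def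
proof (rule Max_ge)
  show "finite {card S | S. independent_set V E S}"
    using assms(1) by (rule finite_cards_of_subsets) (simp add: independent_set_def)
qed (use assms(2) in blast)

lemma MVC_attained:
  assumes "finite V" and "\<And>u v. E u v \<Longrightarrow> u \<in> V \<and> v \<in> V"
  obtains C where "vertex_cover V E C" and "card C = MVC V E"
proof -
  have fin: "finite {card C | C. vertex_cover V E C}"
    using assms(1) by (rule finite_cards_of_subsets) (simp add: vertex_cover_def)
  have "vertex_cover V E V"
    using assms(2) by (auto simp: vertex_cover_def)
  then have "{card C | C. vertex_cover V E C} \<noteq> {}" by auto
  with fin have "MVC V E \<in> {card C | C. vertex_cover V E C}"
    unfolding MVC_def by (rule Min_in)
  then show ?thesis using that by auto
qed

lemma alpha_attained:
  assumes "finite V"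
  obtains S where "independent_set V E S" and "card S = alpha V E"
proof -
  have fin: "finite {card S | S. independent_set V E S}"
    using assms(1) by (rule finite_cards_of_subsets) (simp add: independent_set_def)
  have "independent_set V E {}"
    by (simp add: independent_set_def)
  then have "{card S | S. independent_set V E S} \<noteq> {}" by auto
  with fin have "alpha V E \<in> {card S | S. independent_set V E S}"
    unfolding alpha_def by (rule Max_in)
  then show ?thesis using that by auto
qed

lemma MVC_eq_card_minus_alpha:
  assumes "finite V" and edges: "\<And>u v. E u v \<Longrightarrow> u \<in> V \<and> v \<in> V"
  shows "MVC V E = card V - alpha V E"
proof -
  obtain S where S: "independent_set V E S" "card S = alpha V E"
    using alpha_attained[OF assms(1)] .
  obtain C where C: "vertex_cover V E C" "card C = MVC V E"
    using MVC_attained[OF assms] .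
  have SV: "S \<subseteq> V" and CV: "C \<subseteq> V"
    using S C by (auto simp: independent_set_def vertex_cover_def)
  have cover_complement: "vertex_cover V E (V - S)"
    using vertex_cover_iff_independent_set_complement[OF edges, where C = "V - S"] S SV
    by (simp add: double_diff)
  have independent_complement: "independent_set V E (V - C)"
    using vertex_cover_iff_independent_set_complement[OF edges CV] C(1) ..
  have "MVC V E \<le> card (V - S)"
    using MVC_le_card[OF assms(1) cover_complement] .
  moreover have "card (V - S) = card V - alpha V E"
    using S SV assms(1) by (simp add: card_Diff_subset finite_subset)
  moreover have "card (V - C) \<le> alpha V E"
    using card_le_alpha[OF assms(1) independent_complement] .
  moreover have "card (V - C) = card V - MVC V E"
    using C CV assms(1) by (simp add: card_Diff_subset finite_subset)
  moreover have "MVC V E \<le> card V"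
    using C CV assms(1) by (metis card_mono)
  ultimately show ?thesis by linarith
qed

lemma boxicity_le_MVC_plus_one:
  assumes "finite V" and "\<And>u v. E u v \<Longrightarrow> E v u" and "\<And>u v. E u v \<Longrightarrow> u \<in> V \<and> v \<in> V"
  shows "boxicity V E \<le> MVC V E + 1"
proof -
  obtain C where C: "vertex_cover V E C" "card C = MVC V E"
    using MVC_attained[OF assms(1,3)] .
  obtain l r where "box_rep V E (card C + 1) l r"
    using box_rep_from_vertex_cover[OF assms(1,2) C(1)] by blast
  then show ?thesis
    unfolding boxicity_def C(2)[symmetric] by (intro Least_le) blast
qed

theorem theorem15:
  fixes V :: "'a set" and E :: "'a \<Rightarrow> 'a \<Rightarrow> bool" and n :: nat
  assumes "simple_graph V E" and "card V = n"
  shows "boxicity V E \<le> MVC V E + 2 \<and> MVC V E + 2 = n - alpha V E + 2"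
proof -
  have fin: "finite V" and sym: "\<And>u v. E u v \<Longrightarrow> E v u"
    and edges: "\<And>u v. E u v \<Longrightarrow> u \<in> V \<and> v \<in> V"
    using assms(1) by (auto simp: simple_graph_def)
  have "boxicity V E \<le> MVC V E + 1"
    using boxicity_le_MVC_plus_one[OF fin sym edges] .
  moreover have "MVC V E = n - alpha V E"
    using MVC_eq_card_minus_alpha[OF fin edges] assms(2) by simp
  ultimately show ?thesis by simp
qed

end
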